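(* Let $2\le m\le n$. Then $\mathcal{P}(\mathrm{K}_{m,n})=\mathcal{AM}(\mathrm{K}_{m,n})$.
   Context: $\mathrm{K}_{m,n}$ is the poset $\{x_1,\dots,x_m,y_1,\dots,y_n\}$ with $x_i<y_j$ for all $i,j$ and no other relations between distinct elements. For a finite connected poset $X$ and $x<y$, $e_{xy}$ denotes the incidence-algebra basis element, and $B=\{e_{xy}:x<y\}$. $\mathcal{C}(X)$ is the set of maximal chains. For a bijection $\theta:B\to B$ and $C:u_1<\dots<u_k$ in $\mathcal{C}(X)$, $\theta$ is increasing on $C$ if there is $D:v_1<\dots<v_k$ in $\mathcal{C}(X)$ with $\theta(e_{u_iu_j})=e_{v_iv_j}$ for all $i<j$, decreasing if $\theta(e_{u_iu_j})=e_{v_{k-j+1}v_{k-i+1}}$ for all $i<j$. $\mathcal{M}(X)$: bijections $B\to B$ increasing or decreasing on every maximal chain. A walk is a sequence $u_0,\dots,u_r$ where for each $i$ one of $u_i,u_{i+1}$ covers the other; closed if $u_0=u_r$. For a closed walk $\Gamma:u_0,\dots,u_r=u_0$ and $z\in X$: $s^+_{\theta,\Gamma}(z)=|\{i: u_i<u_{i+1},\ \exists w>z,\ \theta(e_{zw})=e_{u_iu_{i+1}}\}|$, $s^-_{\theta,\Gamma}(z)=|\{i: u_i>u_{i+1},\ \exists w>z,\ \theta(e_{zw})=e_{u_{i+1}u_i}\}|$, $t^+_{\theta,\Gamma}(z)=|\{i: u_i<u_{i+1},\ \exists w<z,\ \theta(e_{wz})=e_{u_iu_{i+1}}\}|$,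 $t^-_{\theta,\Gamma}(z)=|\{i: u_i>u_{i+1},\ \exists w<z,\ \theta(e_{wz})=e_{u_{i+1}u_i}\}|$, $0\le i\le r-1$. $\theta$ is admissible if $s^+-s^-=t^+-t^-$ at every $z$ for every closed walk; $\mathcal{AM}(X)$ is the set of admissible elements of $\mathcal{M}(X)$. $\theta:B\to B$ is proper if there is an automorphism $\lambda$ of $X$ with $\theta(e_{xy})=e_{\lambda(x)\lambda(y)}$ for all $x<y$, or an anti-automorphism $\lambda$ with $\theta(e_{xy})=e_{\lambda(y)\lambda(x)}$ for all $x<y$; $\mathcal{P}(X)$ is the set of proper bijections. *)

theory Defs
  imports Main
begin

text \<open>A finite poset is given by a carrier X and a strict order lt.
  The incidence-algebra basis element e_xy (x < y) is represented by the pair (x,y);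
  B is the set of such pairs.\<close>

definition basis :: "'a set \<Rightarrow> ('a \<Rightarrow> 'a \<Rightarrow> bool) \<Rightarrow> ('a \<times> 'a) set" where
  "basis X lt = {(x, y). x \<in> X \<and> y \<in> X \<and> lt x y}"

definition is_chain :: "'a set \<Rightarrow> ('a \<Rightarrow> 'a \<Rightarrow> bool) \<Rightarrow> 'a list \<Rightarrow> bool" where
  "is_chain X lt us \<longleftrightarrow> set us \<subseteq> X \<and> sorted_wrt lt us"

definition max_chain :: "'a set \<Rightarrow> ('a \<Rightarrow> 'a \<Rightarrow> bool) \<Rightarrow> 'a list \<Rightarrow> bool" where
  "max_chain X lt us \<longleftrightarrow> is_chain X lt us \<and>
     (\<forall>vs. is_chain X lt vs \<and> set us \<subseteq> set vs \<longrightarrow> set vs = set us)"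

definition increasing_on ::
  "'a set \<Rightarrow> ('a \<Rightarrow> 'a \<Rightarrow> bool) \<Rightarrow> ('a \<times> 'a \<Rightarrow> 'a \<times> 'a) \<Rightarrow> 'a list \<Rightarrow> bool" where
  "increasing_on X lt \<theta> us \<longleftrightarrow> (\<exists>vs. max_chain X lt vs \<and> length vs = length us \<and>
     (\<forall>i j. i < j \<and> j < length us \<longrightarrow> \<theta> (us ! i, us ! j) = (vs ! i, vs ! j)))"

definition decreasing_on ::
  "'a set \<Rightarrow> ('a \<Rightarrow> 'a \<Rightarrow> bool) \<Rightarrow> ('a \<times> 'a \<Rightarrow> 'a \<times> 'a) \<Rightarrow> 'a list \<Rightarrow> bool" where
  "decreasing_on X lt \<theta> us \<longleftrightarrow> (\<exists>vs. max_chain X lt vs \<and> length vs = length us \<and>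
     (\<forall>i j. i < j \<and> j < length us \<longrightarrow>
        \<theta> (us ! i, us ! j) = (vs ! (length us - 1 - j), vs ! (length us - 1 - i))))"

definition in_M :: "'a set \<Rightarrow> ('a \<Rightarrow> 'a \<Rightarrow> bool) \<Rightarrow> ('a \<times> 'a \<Rightarrow> 'a \<times> 'a) \<Rightarrow> bool" where
  "in_M X lt \<theta> \<longleftrightarrow> bij_betw \<theta> (basis X lt) (basis X lt) \<and>
     (\<forall>us. max_chain X lt us \<longrightarrow> increasing_on X lt \<theta> us \<or> decreasing_on X lt \<theta> us)"

definition covers :: "'a set \<Rightarrow> ('a \<Rightarrow> 'a \<Rightarrow> bool) \<Rightarrow> 'a \<Rightarrow> 'a \<Rightarrow> bool" where
  "covers X lt a b \<longleftrightarrow> a \<in> X \<and> b \<in> X \<and> lt a b \<and> \<not> (\<exists>c\<in>X. lt a c \<and> lt c b)"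

definition is_walk :: "'a set \<Rightarrow> ('a \<Rightarrow> 'a \<Rightarrow> bool) \<Rightarrow> 'a list \<Rightarrow> bool" where
  "is_walk X lt us \<longleftrightarrow> us \<noteq> [] \<and> set us \<subseteq> X \<and>
     (\<forall>i. Suc i < length us \<longrightarrow> covers X lt (us ! i) (us ! Suc i) \<or> covers X lt (us ! Suc i) (us ! i))"

definition closed_walk :: "'a set \<Rightarrow> ('a \<Rightarrow> 'a \<Rightarrow> bool) \<Rightarrow> 'a list \<Rightarrow> bool" where
  "closed_walk X lt us \<longleftrightarrow> is_walk X lt us \<and> hd us = last us"

definition s_plus where
  "s_plus X lt \<theta> us z = card {i. Suc i < length us \<and> lt (us ! i) (us ! Suc i) \<and>
      (\<exists>w\<in>X. lt z w \<and> \<theta> (z, w) = (us ! i, us ! Suc i))}"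

definition s_minus where
  "s_minus X lt \<theta> us z = card {i. Suc i < length us \<and> lt (us ! Suc i) (us ! i) \<and>
      (\<exists>w\<in>X. lt z w \<and> \<theta> (z, w) = (us ! Suc i, us ! i))}"

definition t_plus where
  "t_plus X lt \<theta> us z = card {i. Suc i < length us \<and> lt (us ! i) (us ! Suc i) \<and>
      (\<exists>w\<in>X. lt w z \<and> \<theta> (w, z) = (us ! i, us ! Suc i))}"

definition t_minus where
  "t_minus X lt \<theta> us z = card {i. Suc i < length us \<and> lt (us ! Suc i) (us ! i) \<and>
      (\<exists>w\<in>X. lt w z \<and> \<theta> (w, z) = (us ! Suc i, us ! i))}"

definition admissible :: "'a set \<Rightarrow> ('a \<Rightarrow> 'a \<Rightarrow> bool) \<Rightarrow> ('a \<times> 'a \<Rightarrow> 'a \<times> 'a) \<Rightarrow> bool" where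
  "admissible X lt \<theta> \<longleftrightarrow> (\<forall>us z. closed_walk X lt us \<and> z \<in> X \<longrightarrow>
     int (s_plus X lt \<theta> us z) - int (s_minus X lt \<theta> us z) =
     int (t_plus X lt \<theta> us z) - int (t_minus X lt \<theta> us z))"

definition in_AM :: "'a set \<Rightarrow> ('a \<Rightarrow> 'a \<Rightarrow> bool) \<Rightarrow> ('a \<times> 'a \<Rightarrow> 'a \<times> 'a) \<Rightarrow> bool" where
  "in_AM X lt \<theta> \<longleftrightarrow> in_M X lt \<theta> \<and> admissible X lt \<theta>"

definition is_automorphism :: "'a set \<Rightarrow> ('a \<Rightarrow> 'a \<Rightarrow> bool) \<Rightarrow> ('a \<Rightarrow> 'a) \<Rightarrow> bool" where
  "is_automorphism X lt f \<longleftrightarrow> bij_betw f X X \<and> (\<forall>x\<in>X. \<forall>y\<in>X. lt x y \<longleftrightarrow> lt (f x) (f y))"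

definition is_antiautomorphism :: "'a set \<Rightarrow> ('a \<Rightarrow> 'a \<Rightarrow> bool) \<Rightarrow> ('a \<Rightarrow> 'a) \<Rightarrow> bool" where
  "is_antiautomorphism X lt f \<longleftrightarrow> bij_betw f X X \<and> (\<forall>x\<in>X. \<forall>y\<in>X. lt x y \<longleftrightarrow> lt (f y) (f x))"

definition in_P :: "'a set \<Rightarrow> ('a \<Rightarrow> 'a \<Rightarrow> bool) \<Rightarrow> ('a \<times> 'a \<Rightarrow> 'a \<times> 'a) \<Rightarrow> bool" where
  "in_P X lt \<theta> \<longleftrightarrow> bij_betw \<theta> (basis X lt) (basis X lt) \<and>
     ((\<exists>f. is_automorphism X lt f \<and> (\<forall>(x, y)\<in>basis X lt. \<theta> (x, y) = (f x, f y))) \<or>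
      (\<exists>f. is_antiautomorphism X lt f \<and> (\<forall>(x, y)\<in>basis X lt. \<theta> (x, y) = (f y, f x))))"

text \<open>K_{m,n}: x_i = Inl i (i < m), y_j = Inr j (j < n), x_i < y_j.\<close>
definition K_set :: "nat \<Rightarrow> nat \<Rightarrow> (nat + nat) set" where
  "K_set m n = Inl ` {..<m} \<union> Inr ` {..<n}"

definition K_lt :: "nat \<Rightarrow> nat \<Rightarrow> (nat + nat) \<Rightarrow> (nat + nat) \<Rightarrow> bool" where
  "K_lt m n a b \<longleftrightarrow> (\<exists>i j. i < m \<and> j < n \<and> a = Inl i \<and> b = Inr j)"

end

theory Submission
  imports Defs
begin

(* A proper map induced by an automorphism or anti-automorphism f sends the edges above and
   below z to the edges leaving and entering f z. Hence, along a closed walk, s+ + t- and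
   t+ + s- count the steps leaving f z and the steps entering f z (in one order or the other),
   and these agree; so proper maps are admissible on every poset.

   Conversely, in K_{m,n} the maximal chains are the edges x_a < y_b, so every bijection of B
   lies in M. Identify an edge with its index pair (a, b). Admissibility at x_a along the
   4-cycle x_i y_j x_k y_l x_i says that the image S of the edges at x_a, as a 0/1 matrix,
   satisfies S(i,j) + S(k,l) = S(k,j) + S(i,l); such a matrix is a union of rows or a union
   of columns, and likewise for the image of the edges at y_b. By injectivity these two
   images meet only in the image of x_a < y_b, so for m, n >= 2 they are never both unions
   of rows nor both unions of columns. Either all images at the x_a are rows and all images
   at the y_b are columns, and then theta maps (a, b) to (sigma a, tau b), an automorphism;
   or the other way round, and theta maps (a, b) to (tau b, sigma a), an anti-automorphism. *)

section \<open>Proper maps are admissible\<close>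

lemma walk_nth_in_carrier:
  assumes "is_walk X lt us" "i < length us"
  shows "us ! i \<in> X"
  using assms by (auto simp: is_walk_def)

lemma card_departures_eq_card_arrivals:
  assumes "us \<noteq> []" "hd us = last us"
  shows "card {i. Suc i < length us \<and> us ! i = v} =
    card {i. Suc i < length us \<and> us ! Suc i = v}"
proof -
  have "length (filter (\<lambda>x. x = v) (butlast us @ [last us])) =
      length (filter (\<lambda>x. x = v) (hd us # tl us))"
    using assms(1) by simp
  then have "length (filter (\<lambda>x. x = v) (butlast us)) = length (filter (\<lambda>x. x = v) (tl us))"
    using assms(2) by (auto split: if_splits)
  moreover have
    "{i. Suc i < length us \<and> us ! i = v} = {i. i < length (butlast us) \<and> butlast us ! i = v}"
    by (auto simp: nth_butlast)
  moreover have "{i. Suc i < length us \<and> us ! Suc i = v} = {i. i < length (tl us) \<and> tl us ! i = v}"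
    by (auto simp: nth_tl)
  ultimately show ?thesis by (simp add: length_filter_conv_card)
qed

lemma walk_card_steps_up_down:
  assumes "is_walk X lt us" "asymp_on X lt"
  shows "card {i. Suc i < length us \<and> P i} =
    card {i. Suc i < length us \<and> lt (us ! i) (us ! Suc i) \<and> P i} +
    card {i. Suc i < length us \<and> lt (us ! Suc i) (us ! i) \<and> P i}"
proof -
  let ?up = "{i. Suc i < length us \<and> lt (us ! i) (us ! Suc i) \<and> P i}"
  let ?down = "{i. Suc i < length us \<and> lt (us ! Suc i) (us ! i) \<and> P i}"
  have "{i. Suc i < length us \<and> P i} = ?up \<union> ?down"
    using assms(1) by (auto simp: is_walk_def covers_def)
  moreover have "\<not> lt (us ! Suc i) (us ! i)"
    if "Suc i < length us" "lt (us ! i) (us ! Suc i)" for i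
    using assms(2) that walk_nth_in_carrier[OF assms(1), of i]
      walk_nth_in_carrier[OF assms(1), of "Suc i"]
    unfolding asymp_on_def by simp
  then have "?up \<inter> ?down = {}" by blast
  moreover have "finite ?up" "finite ?down"
    by (auto intro: finite_subset[of _ "{..<length us}"])
  ultimately show ?thesis by (simp add: card_Un_disjoint)
qed

lemma closed_walk_steps_leaving_eq_entering:
  assumes "closed_walk X lt us" "asymp_on X lt"
  shows "card {i. Suc i < length us \<and> lt (us ! i) (us ! Suc i) \<and> us ! i = v} +
      card {i. Suc i < length us \<and> lt (us ! Suc i) (us ! i) \<and> us ! i = v} =
    card {i. Suc i < length us \<and> lt (us ! i) (us ! Suc i) \<and> us ! Suc i = v} +
      card {i. Suc i < length us \<and> lt (us ! Suc i) (us ! i) \<and> us ! Suc i = v}"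
proof -
  have walk: "is_walk X lt us" and "us \<noteq> []" "hd us = last us"
    using assms(1) unfolding closed_walk_def is_walk_def by simp_all
  then show ?thesis
    using card_departures_eq_card_arrivals[of us v]
      walk_card_steps_up_down[OF walk assms(2), of "\<lambda>i. us ! i = v"]
      walk_card_steps_up_down[OF walk assms(2), of "\<lambda>i. us ! Suc i = v"] by linarith
qed

lemma automorphism_edge_image:
  assumes f: "is_automorphism X lt f"
    and \<theta>: "\<forall>(x, y)\<in>basis X lt. \<theta> (x, y) = (f x, f y)"
    and z: "z \<in> X" and "a \<in> X" "b \<in> X" "lt a b"
  shows "(\<exists>w\<in>X. lt z w \<and> \<theta> (z, w) = (a, b)) \<longleftrightarrow> a = f z"
    and "(\<exists>w\<in>X. lt w z \<and> \<theta> (w, z) = (a, b)) \<longleftrightarrow> b = f z"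
proof -
  have onto: "\<exists>w\<in>X. y = f w" if "y \<in> X" for y
    using f that by (auto simp: is_automorphism_def bij_betw_def)
  have edge: "lt x y \<and> \<theta> (x, y) = (a, b) \<longleftrightarrow> a = f x \<and> b = f y"
    if "x \<in> X" "y \<in> X" for x y
  proof -
    have "lt x y \<longleftrightarrow> lt (f x) (f y)" using f that unfolding is_automorphism_def by blast
    moreover have "lt x y \<Longrightarrow> \<theta> (x, y) = (f x, f y)"
      using \<theta> that unfolding basis_def by blast
    ultimately show ?thesis using \<open>lt a b\<close> by auto
  qed
  show "(\<exists>w\<in>X. lt z w \<and> \<theta> (z, w) = (a, b)) \<longleftrightarrow> a = f z"
    using onto[OF \<open>b \<in> X\<close>] edge[OF z] by blast
  show "(\<exists>w\<in>X. lt w z \<and> \<theta> (w, z) = (a, b)) \<longleftrightarrow> b = f z"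
    using onto[OF \<open>a \<in> X\<close>] edge[OF _ z] by blast
qed

lemma antiautomorphism_edge_image:
  assumes f: "is_antiautomorphism X lt f"
    and \<theta>: "\<forall>(x, y)\<in>basis X lt. \<theta> (x, y) = (f y, f x)"
    and z: "z \<in> X" and "a \<in> X" "b \<in> X" "lt a b"
  shows "(\<exists>w\<in>X. lt z w \<and> \<theta> (z, w) = (a, b)) \<longleftrightarrow> b = f z"
    and "(\<exists>w\<in>X. lt w z \<and> \<theta> (w, z) = (a, b)) \<longleftrightarrow> a = f z"
proof -
  have onto: "\<exists>w\<in>X. y = f w" if "y \<in> X" for y
    using f that by (auto simp: is_antiautomorphism_def bij_betw_def)
  have edge: "lt x y \<and> \<theta> (x, y) = (a, b) \<longleftrightarrow> a = f y \<and> b = f x"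
    if "x \<in> X" "y \<in> X" for x y
  proof -
    have "lt x y \<longleftrightarrow> lt (f y) (f x)" using f that unfolding is_antiautomorphism_def by blast
    moreover have "lt x y \<Longrightarrow> \<theta> (x, y) = (f y, f x)"
      using \<theta> that unfolding basis_def by blast
    ultimately show ?thesis using \<open>lt a b\<close> by auto
  qed
  show "(\<exists>w\<in>X. lt z w \<and> \<theta> (z, w) = (a, b)) \<longleftrightarrow> b = f z"
    using onto[OF \<open>a \<in> X\<close>] edge[OF z] by blast
  show "(\<exists>w\<in>X. lt w z \<and> \<theta> (w, z) = (a, b)) \<longleftrightarrow> a = f z"
    using onto[OF \<open>b \<in> X\<close>] edge[OF _ z] by blast
qed

lemma proper_imp_admissible:
  assumes asym: "asymp_on X lt" and proper: "in_P X lt \<theta>"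
  shows "admissible X lt \<theta>"
  unfolding admissible_def
proof (intro allI impI, elim conjE)
  fix us z assume closed: "closed_walk X lt us" and z: "z \<in> X"
  then have walk: "is_walk X lt us"
    unfolding closed_walk_def by simp
  have in_X: "us ! i \<in> X" "us ! Suc i \<in> X" if "Suc i < length us" for i
    using walk_nth_in_carrier[OF walk] that by simp_all
  let ?up = "\<lambda>Q. card {i. Suc i < length us \<and> lt (us ! i) (us ! Suc i) \<and> Q i}"
  let ?down = "\<lambda>Q. card {i. Suc i < length us \<and> lt (us ! Suc i) (us ! i) \<and> Q i}"
  note balance = closed_walk_steps_leaving_eq_entering[OF closed asym]
  from proper consider
      (aut) f where "is_automorphism X lt f"
        "\<forall>(x, y)\<in>basis X lt. \<theta> (x, y) = (f x, f y)"
    | (anti) f where "is_antiautomorphism X lt f"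
        "\<forall>(x, y)\<in>basis X lt. \<theta> (x, y) = (f y, f x)"
    unfolding in_P_def by blast
  then show "int (s_plus X lt \<theta> us z) - int (s_minus X lt \<theta> us z) =
      int (t_plus X lt \<theta> us z) - int (t_minus X lt \<theta> us z)"
  proof cases
    case aut
    note edge = automorphism_edge_image[OF aut z in_X(1) in_X(2)]
      automorphism_edge_image[OF aut z in_X(2) in_X(1)]
    have "s_plus X lt \<theta> us z = ?up (\<lambda>i. us ! i = f z)"
      "s_minus X lt \<theta> us z = ?down (\<lambda>i. us ! Suc i = f z)"
      "t_plus X lt \<theta> us z = ?up (\<lambda>i. us ! Suc i = f z)"
      "t_minus X lt \<theta> us z = ?down (\<lambda>i. us ! i = f z)"
      unfolding s_plus_def s_minus_def t_plus_def t_minus_def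
      by (simp_all add: edge cong: conj_cong)
    then show ?thesis using balance[of "f z"] by linarith
  next
    case anti
    note edge = antiautomorphism_edge_image[OF anti z in_X(1) in_X(2)]
      antiautomorphism_edge_image[OF anti z in_X(2) in_X(1)]
    have "s_plus X lt \<theta> us z = ?up (\<lambda>i. us ! Suc i = f z)"
      "s_minus X lt \<theta> us z = ?down (\<lambda>i. us ! i = f z)"
      "t_plus X lt \<theta> us z = ?up (\<lambda>i. us ! i = f z)"
      "t_minus X lt \<theta> us z = ?down (\<lambda>i. us ! Suc i = f z)"
      unfolding s_plus_def s_minus_def t_plus_def t_minus_def
      by (simp_all add: edge cong: conj_cong)
    then show ?thesis using balance[of "f z"] by linarith
  qed
qed

section \<open>Exchange matrices\<close>

lemma card_Collect_less_eq_sum_of_bool: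
  fixes N :: nat
  shows "card {i. i < N \<and> Q i} = (\<Sum>i<N. of_bool (Q i))"
proof -
  have "{i. i < N \<and> Q i} = {..<N} \<inter> {i. Q i}" by auto
  moreover have "(\<Sum>i<N. of_bool (Q i)) = of_nat (card ({..<N} \<inter> {i. Q i}))"
    by (rule sum_of_bool_eq) simp_all
  ultimately show ?thesis by simp
qed

lemma card_steps_of_length_five:
  "card {i. Suc i < length [u\<^sub>0, u\<^sub>1, u\<^sub>2, u\<^sub>3, u\<^sub>4] \<and> Q i} =
    of_bool (Q 0) + of_bool (Q (Suc 0)) + of_bool (Q (Suc (Suc 0))) +
    of_bool (Q (Suc (Suc (Suc 0))))"
proof -
  have "{i. Suc i < length [u\<^sub>0, u\<^sub>1, u\<^sub>2, u\<^sub>3, u\<^sub>4] \<and> Q i} =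
      {i. i < Suc (Suc (Suc (Suc 0))) \<and> Q i}"
    by auto
  then show ?thesis by (simp add: card_Collect_less_eq_sum_of_bool)
qed

definition union_of_rows :: "nat \<Rightarrow> nat \<Rightarrow> (nat \<Rightarrow> nat \<Rightarrow> bool) \<Rightarrow> bool" where
  "union_of_rows m n P \<longleftrightarrow> (\<forall>c<m. \<forall>d<n. \<forall>d'<n. P c d \<longrightarrow> P c d')"

definition union_of_columns :: "nat \<Rightarrow> nat \<Rightarrow> (nat \<Rightarrow> nat \<Rightarrow> bool) \<Rightarrow> bool" where
  "union_of_columns m n P \<longleftrightarrow> (\<forall>c<m. \<forall>c'<m. \<forall>d<n. P c d \<longrightarrow> P c' d)"

lemma exchange_imp_union_of_rows_or_columns:
  assumes exchange: "\<And>i k j l. i < m \<Longrightarrow> k < m \<Longrightarrow> j < n \<Longrightarrow> l < n \<Longrightarrow>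
    of_bool (P i j) + of_bool (P k l) = (of_bool (P k j) + of_bool (P i l) :: nat)"
  shows "union_of_rows m n P \<or> union_of_columns m n P"
proof (rule disjCI)
  assume "\<not> union_of_columns m n P"
  then obtain c c' d where cd: "c < m" "c' < m" "d < n" "P c d" "\<not> P c' d"
    unfolding union_of_columns_def by blast
  have row_c: "P c e" if "e < n" for e
    using exchange[OF cd(1,2,3) that] cd(4,5) by (auto simp: of_bool_def split: if_splits)
  show "union_of_rows m n P"
    unfolding union_of_rows_def
  proof (intro allI impI)
    fix r e e' assume "r < m" "e < n" "e' < n" "P r e"
    then show "P r e'"
      using exchange[OF \<open>r < m\<close> cd(1) \<open>e < n\<close> \<open>e' < n\<close>]
        row_c[OF \<open>e < n\<close>] row_c[OF \<open>e' < n\<close>]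
      by (auto simp: of_bool_def split: if_splits)
  qed
qed

section \<open>The poset K_{m,n}\<close>

lemma K_set_iff [simp]:
  "Inl i \<in> K_set m n \<longleftrightarrow> i < m"
  "Inr j \<in> K_set m n \<longleftrightarrow> j < n"
  by (auto simp: K_set_def)

lemma K_lt_iff [simp]:
  "K_lt m n (Inl i) (Inr j) \<longleftrightarrow> i < m \<and> j < n"
  "\<not> K_lt m n (Inr j) y"
  "\<not> K_lt m n x (Inl i)"
  by (auto simp: K_lt_def)

lemma K_basis_iff:
  "p \<in> basis (K_set m n) (K_lt m n) \<longleftrightarrow> (\<exists>i<m. \<exists>j<n. p = (Inl i, Inr j))"
  by (auto simp: basis_def K_lt_def)

lemma asymp_on_K: "asymp_on (K_set m n) (K_lt m n)"
  by (auto simp: asymp_on_def K_lt_def)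

lemma K_bex_above_Inl [simp]:
  "(\<exists>w\<in>K_set m n. K_lt m n (Inl a) w \<and> P w) \<longleftrightarrow> a < m \<and> (\<exists>b<n. P (Inr b))"
proof
  assume "a < m \<and> (\<exists>b<n. P (Inr b))"
  then obtain b where "a < m" "b < n" "P (Inr b)" by blast
  then show "\<exists>w\<in>K_set m n. K_lt m n (Inl a) w \<and> P w"
    by (intro bexI[of _ "Inr b"]) simp_all
qed (auto simp: K_lt_def)

lemma K_bex_below_Inr [simp]:
  "(\<exists>w\<in>K_set m n. K_lt m n w (Inr b) \<and> P w) \<longleftrightarrow> b < n \<and> (\<exists>a<m. P (Inl a))"
proof
  assume "b < n \<and> (\<exists>a<m. P (Inl a))"
  then obtain a where "a < m" "b < n" "P (Inl a)" by blast
  then show "\<exists>w\<in>K_set m n. K_lt m n w (Inr b) \<and> P w"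
    by (intro bexI[of _ "Inl a"]) simp_all
qed (auto simp: K_lt_def)

lemma K_sorted_cases:
  assumes "sorted_wrt (K_lt m n) vs"
  shows "vs = [] \<or> (\<exists>x. vs = [x]) \<or> (\<exists>i<m. \<exists>j<n. vs = [Inl i, Inr j])"
  using assms by (cases vs rule: remdups_adj.cases) (auto simp: K_lt_def)

lemma K_max_chain_iff:
  assumes "0 < m" "0 < n"
  shows "max_chain (K_set m n) (K_lt m n) us \<longleftrightarrow> (\<exists>i<m. \<exists>j<n. us = [Inl i, Inr j])"
proof
  have edge_chain: "is_chain (K_set m n) (K_lt m n) [Inl i, Inr j]" if "i < m" "j < n" for i j
    using that by (simp add: is_chain_def)
  assume "max_chain (K_set m n) (K_lt m n) us"
  then have chain: "set us \<subseteq> K_set m n" "sorted_wrt (K_lt m n) us"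
    and grow: "\<And>vs. is_chain (K_set m n) (K_lt m n) vs \<Longrightarrow> set us \<subseteq> set vs \<Longrightarrow>
      set vs = set us"
    by (auto simp: max_chain_def is_chain_def)
  show "\<exists>i<m. \<exists>j<n. us = [Inl i, Inr j]"
  proof (rule ccontr)
    assume "\<not> ?thesis"
    then consider "us = []" | x where "us = [x]"
      using K_sorted_cases[OF chain(2)] by blast
    then show False
    proof cases
      case 1
      then show False using grow[OF edge_chain[OF assms]] by simp
    next
      case (2 x)
      then show False
        using chain(1) grow[OF edge_chain[OF _ assms(2)]] grow[OF edge_chain[OF assms(1)]]
        by (cases x) auto
    qed
  qed
next
  assume "\<exists>i<m. \<exists>j<n. us = [Inl i, Inr j]"
  then obtain i j where ij: "i < m" "j < n" "us = [Inl i, Inr j]" by blast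
  show "max_chain (K_set m n) (K_lt m n) us"
    unfolding max_chain_def
  proof (intro conjI allI impI)
    show "is_chain (K_set m n) (K_lt m n) us" using ij by (simp add: is_chain_def)
    fix vs assume "is_chain (K_set m n) (K_lt m n) vs \<and> set us \<subseteq> set vs"
    then have "sorted_wrt (K_lt m n) vs" "set us \<subseteq> set vs" by (auto simp: is_chain_def)
    then show "set vs = set us"
      using K_sorted_cases[of m n vs] ij by auto
  qed
qed

lemma K_in_M:
  assumes "0 < m" "0 < n"
    and bij: "bij_betw \<theta> (basis (K_set m n) (K_lt m n)) (basis (K_set m n) (K_lt m n))"
  shows "in_M (K_set m n) (K_lt m n) \<theta>"
  unfolding in_M_def
proof (intro conjI allI impI disjI1)
  fix us assume "max_chain (K_set m n) (K_lt m n) us"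
  then obtain i j where ij: "i < m" "j < n" "us = [Inl i, Inr j]"
    using K_max_chain_iff[OF assms(1,2)] by blast
  then have "\<theta> (Inl i, Inr j) \<in> basis (K_set m n) (K_lt m n)"
    using bij_betwE[OF bij] by (auto simp: K_basis_iff)
  then obtain c d where cd: "c < m" "d < n" "\<theta> (Inl i, Inr j) = (Inl c, Inr d)"
    by (auto simp: K_basis_iff)
  show "increasing_on (K_set m n) (K_lt m n) \<theta> us"
    unfolding increasing_on_def
  proof (intro exI[of _ "[Inl c, Inr d]"] conjI allI impI)
    show "max_chain (K_set m n) (K_lt m n) [Inl c, Inr d]"
      using K_max_chain_iff[OF assms(1,2)] cd by blast
    fix p q assume "p < q \<and> q < length us"
    then have "p = 0" "q = 1" using ij by auto
    then show "\<theta> (us ! p, us ! q) = ([Inl c, Inr d] ! p, [Inl c, Inr d] ! q)"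
      using ij cd by simp
  qed (use ij in simp)
qed (use bij in simp)

section \<open>Admissible maps of K_{m,n}\<close>

type_synonym K_map = "(nat + nat) \<times> (nat + nat) \<Rightarrow> (nat + nat) \<times> (nat + nat)"

definition out_image :: "nat \<Rightarrow> K_map \<Rightarrow> nat \<Rightarrow> nat \<Rightarrow> nat \<Rightarrow> bool" where
  "out_image n \<theta> a c d \<longleftrightarrow> (\<exists>b<n. \<theta> (Inl a, Inr b) = (Inl c, Inr d))"

definition in_image :: "nat \<Rightarrow> K_map \<Rightarrow> nat \<Rightarrow> nat \<Rightarrow> nat \<Rightarrow> bool" where
  "in_image m \<theta> b c d \<longleftrightarrow> (\<exists>a<m. \<theta> (Inl a, Inr b) = (Inl c, Inr d))"

lemma K_four_cycle:
  assumes "i < m" "k < m" "j < n" "l < n"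
  shows "closed_walk (K_set m n) (K_lt m n) [Inl i, Inr j, Inl k, Inr l, Inl i]"
proof -
  have "covers (K_set m n) (K_lt m n) x y \<longleftrightarrow> K_lt m n x y" for x y
    by (auto simp: covers_def K_lt_def)
  then show ?thesis
    using assms by (auto simp: closed_walk_def is_walk_def less_Suc_eq)
qed

lemma K_admissible_out_image_exchange:
  assumes adm: "admissible (K_set m n) (K_lt m n) \<theta>"
    and "a < m" "i < m" "k < m" "j < n" "l < n"
  shows "of_bool (out_image n \<theta> a i j) + of_bool (out_image n \<theta> a k l) =
    (of_bool (out_image n \<theta> a k j) + of_bool (out_image n \<theta> a i l) :: nat)"
proof -
  let ?K = "K_set m n" and ?lt = "K_lt m n" and ?W = "[Inl i, Inr j, Inl k, Inr l, Inl i]"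
  have "int (s_plus ?K ?lt \<theta> ?W (Inl a)) - int (s_minus ?K ?lt \<theta> ?W (Inl a)) =
      int (t_plus ?K ?lt \<theta> ?W (Inl a)) - int (t_minus ?K ?lt \<theta> ?W (Inl a))"
    using adm K_four_cycle[OF assms(3-6)] \<open>a < m\<close> unfolding admissible_def by simp
  moreover have
    "s_plus ?K ?lt \<theta> ?W (Inl a) = of_bool (out_image n \<theta> a i j) + of_bool (out_image n \<theta> a k l)"
    using assms(2-6) unfolding s_plus_def out_image_def card_steps_of_length_five by simp
  moreover have
    "s_minus ?K ?lt \<theta> ?W (Inl a) = of_bool (out_image n \<theta> a k j) + of_bool (out_image n \<theta> a i l)"
    using assms(2-6) unfolding s_minus_def out_image_def card_steps_of_length_five by simp
  moreover have "t_plus ?K ?lt \<theta> ?W (Inl a) = 0" "t_minus ?K ?lt \<theta> ?W (Inl a) = 0"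
    unfolding t_plus_def t_minus_def by simp_all
  ultimately show ?thesis by linarith
qed

lemma K_admissible_in_image_exchange:
  assumes adm: "admissible (K_set m n) (K_lt m n) \<theta>"
    and "b < n" "i < m" "k < m" "j < n" "l < n"
  shows "of_bool (in_image m \<theta> b i j) + of_bool (in_image m \<theta> b k l) =
    (of_bool (in_image m \<theta> b k j) + of_bool (in_image m \<theta> b i l) :: nat)"
proof -
  let ?K = "K_set m n" and ?lt = "K_lt m n" and ?W = "[Inl i, Inr j, Inl k, Inr l, Inl i]"
  have "int (s_plus ?K ?lt \<theta> ?W (Inr b)) - int (s_minus ?K ?lt \<theta> ?W (Inr b)) =
      int (t_plus ?K ?lt \<theta> ?W (Inr b)) - int (t_minus ?K ?lt \<theta> ?W (Inr b))"
    using adm K_four_cycle[OF assms(3-6)] \<open>b < n\<close> unfolding admissible_def by simp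
  moreover have
    "t_plus ?K ?lt \<theta> ?W (Inr b) = of_bool (in_image m \<theta> b i j) + of_bool (in_image m \<theta> b k l)"
    using assms(2-6) unfolding t_plus_def in_image_def card_steps_of_length_five by simp
  moreover have
    "t_minus ?K ?lt \<theta> ?W (Inr b) = of_bool (in_image m \<theta> b k j) + of_bool (in_image m \<theta> b i l)"
    using assms(2-6) unfolding t_minus_def in_image_def card_steps_of_length_five by simp
  moreover have "s_plus ?K ?lt \<theta> ?W (Inr b) = 0" "s_minus ?K ?lt \<theta> ?W (Inr b) = 0"
    unfolding s_plus_def s_minus_def by simp_all
  ultimately show ?thesis by linarith
qed

context
  fixes m n :: nat and \<theta> :: K_map
  assumes bij: "bij_betw \<theta> (basis (K_set m n) (K_lt m n)) (basis (K_set m n) (K_lt m n))"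
begin

lemma K_image_edge:
  assumes "a < m" "b < n"
  obtains c d where "c < m" "d < n" "\<theta> (Inl a, Inr b) = (Inl c, Inr d)"
proof -
  have "\<theta> (Inl a, Inr b) \<in> basis (K_set m n) (K_lt m n)"
    using bij_betwE[OF bij] assms by (auto simp: K_basis_iff)
  then show thesis using that by (auto simp: K_basis_iff)
qed

lemma K_image_edge_inj:
  assumes "a < m" "b < n" "a' < m" "b' < n" "\<theta> (Inl a, Inr b) = \<theta> (Inl a', Inr b')"
  shows "a = a' \<and> b = b'"
proof -
  have "inj_on \<theta> (basis (K_set m n) (K_lt m n))" using bij by (simp add: bij_betw_def)
  then have "(Inl a, Inr b) = ((Inl a', Inr b') :: (nat + nat) \<times> (nat + nat))"
    using assms by (auto simp: K_basis_iff dest: inj_onD)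
  then show ?thesis by simp
qed

lemma out_in_image_meet:
  assumes "a < m" "b < n" "out_image n \<theta> a c d" "in_image m \<theta> b c d"
  shows "\<theta> (Inl a, Inr b) = (Inl c, Inr d)"
proof -
  obtain b' where "b' < n" "\<theta> (Inl a, Inr b') = (Inl c, Inr d)"
    using assms(3) unfolding out_image_def by blast
  moreover obtain a' where "a' < m" "\<theta> (Inl a', Inr b) = (Inl c, Inr d)"
    using assms(4) unfolding in_image_def by blast
  ultimately show ?thesis
    using K_image_edge_inj[of a b' a' b] assms(1,2) by auto
qed

lemma out_in_images_not_both_rows:
  assumes "2 \<le> n" "a < m" "b < n"
    and "union_of_rows m n (out_image n \<theta> a)" "union_of_rows m n (in_image m \<theta> b)"
  shows False
proof -
  obtain c d where cd: "c < m" "d < n" "\<theta> (Inl a, Inr b) = (Inl c, Inr d)"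
    using K_image_edge[OF assms(2,3)] .
  obtain d' where d': "d' < n" "d' \<noteq> d"
    using assms(1) by (intro that[of "if d = 0 then 1 else 0"]) auto
  have "out_image n \<theta> a c d" "in_image m \<theta> b c d"
    using assms(2,3) cd unfolding out_image_def in_image_def by blast+
  then have "out_image n \<theta> a c d'" "in_image m \<theta> b c d'"
    using assms(4,5) cd d' unfolding union_of_rows_def by blast+
  then have "\<theta> (Inl a, Inr b) = (Inl c, Inr d')"
    using out_in_image_meet[OF assms(2,3)] by blast
  then show False using cd d' by simp
qed

lemma out_in_images_not_both_columns:
  assumes "2 \<le> m" "a < m" "b < n"
    and "union_of_columns m n (out_image n \<theta> a)" "union_of_columns m n (in_image m \<theta> b)"
  shows False
proof -
  obtain c d where cd: "c < m" "d < n" "\<theta> (Inl a, Inr b) = (Inl c, Inr d)"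
    using K_image_edge[OF assms(2,3)] .
  obtain c' where c': "c' < m" "c' \<noteq> c"
    using assms(1) by (intro that[of "if c = 0 then 1 else 0"]) auto
  have "out_image n \<theta> a c d" "in_image m \<theta> b c d"
    using assms(2,3) cd unfolding out_image_def in_image_def by blast+
  then have "out_image n \<theta> a c' d" "in_image m \<theta> b c' d"
    using assms(4,5) cd c' unfolding union_of_columns_def by blast+
  then have "\<theta> (Inl a, Inr b) = (Inl c', Inr d)"
    using out_in_image_meet[OF assms(2,3)] by blast
  then show False using cd c' by simp
qed

lemma out_rows_in_columns_imp_automorphism_form:
  assumes "0 < m" "0 < n"
    and rows: "\<And>a. a < m \<Longrightarrow> union_of_rows m n (out_image n \<theta> a)"
    and columns: "\<And>b. b < n \<Longrightarrow> union_of_columns m n (in_image m \<theta> b)"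
  shows "\<exists>\<sigma> \<tau>. \<forall>a<m. \<forall>b<n. \<theta> (Inl a, Inr b) = (Inl (\<sigma> a), Inr (\<tau> b))"
proof -
  define \<sigma> where "\<sigma> a = projl (fst (\<theta> (Inl a, Inr 0)))" for a
  define \<tau> where "\<tau> b = projr (snd (\<theta> (Inl 0, Inr b)))" for b
  have "\<theta> (Inl a, Inr b) = (Inl (\<sigma> a), Inr (\<tau> b))" if "a < m" "b < n" for a b
  proof -
    obtain c d where cd: "c < m" "d < n" "\<theta> (Inl a, Inr 0) = (Inl c, Inr d)"
      using K_image_edge[OF \<open>a < m\<close> \<open>0 < n\<close>] .
    obtain c' d' where cd': "c' < m" "d' < n" "\<theta> (Inl 0, Inr b) = (Inl c', Inr d')"
      using K_image_edge[OF \<open>0 < m\<close> \<open>b < n\<close>] .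
    have "out_image n \<theta> a c d" "in_image m \<theta> b c' d'"
      using cd cd' assms(1,2) unfolding out_image_def in_image_def by blast+
    then have "out_image n \<theta> a c d'" "in_image m \<theta> b c d'"
      using rows[OF \<open>a < m\<close>] columns[OF \<open>b < n\<close>] cd cd'
      unfolding union_of_rows_def union_of_columns_def by blast+
    then show ?thesis using out_in_image_meet[OF that] cd cd' by (simp add: \<sigma>_def \<tau>_def)
  qed
  then show ?thesis by blast
qed

lemma out_columns_in_rows_imp_antiautomorphism_form:
  assumes "0 < m" "0 < n"
    and columns: "\<And>a. a < m \<Longrightarrow> union_of_columns m n (out_image n \<theta> a)"
    and rows: "\<And>b. b < n \<Longrightarrow> union_of_rows m n (in_image m \<theta> b)"
  shows "\<exists>\<sigma> \<tau>. \<forall>a<m. \<forall>b<n. \<theta> (Inl a, Inr b) = (Inl (\<tau> b), Inr (\<sigma> a))"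
proof -
  define \<sigma> where "\<sigma> a = projr (snd (\<theta> (Inl a, Inr 0)))" for a
  define \<tau> where "\<tau> b = projl (fst (\<theta> (Inl 0, Inr b)))" for b
  have "\<theta> (Inl a, Inr b) = (Inl (\<tau> b), Inr (\<sigma> a))" if "a < m" "b < n" for a b
  proof -
    obtain c d where cd: "c < m" "d < n" "\<theta> (Inl a, Inr 0) = (Inl c, Inr d)"
      using K_image_edge[OF \<open>a < m\<close> \<open>0 < n\<close>] .
    obtain c' d' where cd': "c' < m" "d' < n" "\<theta> (Inl 0, Inr b) = (Inl c', Inr d')"
      using K_image_edge[OF \<open>0 < m\<close> \<open>b < n\<close>] .
    have "out_image n \<theta> a c d" "in_image m \<theta> b c' d'"
      using cd cd' assms(1,2) unfolding out_image_def in_image_def by blast+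
    then have "out_image n \<theta> a c' d" "in_image m \<theta> b c' d"
      using columns[OF \<open>a < m\<close>] rows[OF \<open>b < n\<close>] cd cd'
      unfolding union_of_rows_def union_of_columns_def by blast+
    then show ?thesis using out_in_image_meet[OF that] cd cd' by (simp add: \<sigma>_def \<tau>_def)
  qed
  then show ?thesis by blast
qed

lemma automorphism_form_imp_in_P:
  assumes "0 < m" "0 < n"
    and form: "\<And>a b. a < m \<Longrightarrow> b < n \<Longrightarrow> \<theta> (Inl a, Inr b) = (Inl (\<sigma> a), Inr (\<tau> b))"
  shows "in_P (K_set m n) (K_lt m n) \<theta>"
proof -
  have \<sigma>: "\<sigma> a < m" if "a < m" for a
    using K_image_edge[OF that \<open>0 < n\<close>] form[OF that \<open>0 < n\<close>] by auto
  have \<tau>: "\<tau> b < n" if "b < n" for b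
    using K_image_edge[OF \<open>0 < m\<close> that] form[OF \<open>0 < m\<close> that] by auto
  define f where "f = case_sum (Inl \<circ> \<sigma>) (Inr \<circ> \<tau>)"
  have into: "f ` K_set m n \<subseteq> K_set m n"
    using \<sigma> \<tau> by (auto simp: K_set_def f_def)
  have "inj_on f (K_set m n)"
  proof (rule inj_onI)
    fix x y assume "x \<in> K_set m n" "y \<in> K_set m n" "f x = f y"
    then show "x = y"
      using K_image_edge_inj[of _ 0 _ 0] K_image_edge_inj[of 0 _ 0] form assms(1,2)
      by (auto simp: K_set_def f_def)
  qed
  then have "bij_betw f (K_set m n) (K_set m n)"
    using endo_inj_surj[OF _ into] by (simp add: bij_betw_def K_set_def)
  moreover have "\<forall>x\<in>K_set m n. \<forall>y\<in>K_set m n. K_lt m n x y \<longleftrightarrow> K_lt m n (f x) (f y)"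
    using \<sigma> \<tau> by (auto simp: K_set_def f_def)
  moreover have "\<forall>(x, y)\<in>basis (K_set m n) (K_lt m n). \<theta> (x, y) = (f x, f y)"
    using form by (auto simp: K_basis_iff f_def)
  ultimately show ?thesis
    using bij unfolding in_P_def is_automorphism_def by blast
qed

lemma antiautomorphism_form_imp_in_P:
  assumes "0 < m" "0 < n"
    and form: "\<And>a b. a < m \<Longrightarrow> b < n \<Longrightarrow> \<theta> (Inl a, Inr b) = (Inl (\<tau> b), Inr (\<sigma> a))"
  shows "in_P (K_set m n) (K_lt m n) \<theta>"
proof -
  have \<sigma>: "\<sigma> a < n" if "a < m" for a
    using K_image_edge[OF that \<open>0 < n\<close>] form[OF that \<open>0 < n\<close>] by auto
  have \<tau>: "\<tau> b < m" if "b < n" for b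
    using K_image_edge[OF \<open>0 < m\<close> that] form[OF \<open>0 < m\<close> that] by auto
  define f where "f = case_sum (Inr \<circ> \<sigma>) (Inl \<circ> \<tau>)"
  have into: "f ` K_set m n \<subseteq> K_set m n"
    using \<sigma> \<tau> by (auto simp: K_set_def f_def)
  have "inj_on f (K_set m n)"
  proof (rule inj_onI)
    fix x y assume "x \<in> K_set m n" "y \<in> K_set m n" "f x = f y"
    then show "x = y"
      using K_image_edge_inj[of _ 0 _ 0] K_image_edge_inj[of 0 _ 0] form assms(1,2)
      by (auto simp: K_set_def f_def)
  qed
  then have "bij_betw f (K_set m n) (K_set m n)"
    using endo_inj_surj[OF _ into] by (simp add: bij_betw_def K_set_def)
  moreover have "\<forall>x\<in>K_set m n. \<forall>y\<in>K_set m n. K_lt m n x y \<longleftrightarrow> K_lt m n (f y) (f x)"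
    using \<sigma> \<tau> by (auto simp: K_set_def f_def)
  moreover have "\<forall>(x, y)\<in>basis (K_set m n) (K_lt m n). \<theta> (x, y) = (f y, f x)"
    using form by (auto simp: K_basis_iff f_def)
  ultimately show ?thesis
    using bij unfolding in_P_def is_antiautomorphism_def by blast
qed

lemma K_admissible_imp_in_P:
  assumes "2 \<le> m" "2 \<le> n" and adm: "admissible (K_set m n) (K_lt m n) \<theta>"
  shows "in_P (K_set m n) (K_lt m n) \<theta>"
proof -
  have "0 < m" "0 < n" using assms(1,2) by simp_all
  have out: "union_of_rows m n (out_image n \<theta> a) \<or> union_of_columns m n (out_image n \<theta> a)"
    if "a < m" for a
    using exchange_imp_union_of_rows_or_columns K_admissible_out_image_exchange[OF adm that] by blast
  have "in": "union_of_rows m n (in_image m \<theta> b) \<or> union_of_columns m n (in_image m \<theta> b)"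
    if "b < n" for b
    using exchange_imp_union_of_rows_or_columns K_admissible_in_image_exchange[OF adm that] by blast
  note no_rows = out_in_images_not_both_rows[OF \<open>2 \<le> n\<close>]
  note no_columns = out_in_images_not_both_columns[OF \<open>2 \<le> m\<close>]
  show ?thesis
  proof (cases "union_of_columns m n (in_image m \<theta> 0)")
    case True
    then have "union_of_rows m n (out_image n \<theta> a)" if "a < m" for a
      using out[OF that] no_columns[OF that \<open>0 < n\<close>] by blast
    moreover from this have "union_of_columns m n (in_image m \<theta> b)" if "b < n" for b
      using "in"[OF that] no_rows[OF \<open>0 < m\<close> that] \<open>0 < m\<close> by blast
    ultimately show ?thesis
      using out_rows_in_columns_imp_automorphism_form automorphism_form_imp_in_P \<open>0 < m\<close> \<open>0 < n\<close>
      by metis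
  next
    case False
    then have "union_of_columns m n (out_image n \<theta> a)" if "a < m" for a
      using out[OF that] "in"[OF \<open>0 < n\<close>] no_rows[OF that \<open>0 < n\<close>] by blast
    moreover from this have "union_of_rows m n (in_image m \<theta> b)" if "b < n" for b
      using "in"[OF that] no_columns[OF \<open>0 < m\<close> that] \<open>0 < m\<close> by blast
    ultimately show ?thesis
      using out_columns_in_rows_imp_antiautomorphism_form antiautomorphism_form_imp_in_P \<open>0 < m\<close> \<open>0 < n\<close>
      by metis
  qed
qed

end

theorem proposition4p14:
  fixes m n :: nat
  assumes "2 \<le> m" and "m \<le> n"
  shows "{\<theta>. in_P (K_set m n) (K_lt m n) \<theta>} = {\<theta>. in_AM (K_set m n) (K_lt m n) \<theta>}"
proof -
  have "2 \<le> n" using assms by simp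
  have "in_P (K_set m n) (K_lt m n) \<theta> \<longleftrightarrow> in_AM (K_set m n) (K_lt m n) \<theta>" for \<theta>
  proof
    assume proper: "in_P (K_set m n) (K_lt m n) \<theta>"
    then have "in_M (K_set m n) (K_lt m n) \<theta>"
      using K_in_M \<open>2 \<le> m\<close> \<open>2 \<le> n\<close> by (simp add: in_P_def)
    then show "in_AM (K_set m n) (K_lt m n) \<theta>"
      using proper_imp_admissible[OF asymp_on_K proper] by (simp add: in_AM_def)
  next
    assume "in_AM (K_set m n) (K_lt m n) \<theta>"
    then show "in_P (K_set m n) (K_lt m n) \<theta>"
      using K_admissible_imp_in_P \<open>2 \<le> m\<close> \<open>2 \<le> n\<close> by (simp add: in_AM_def in_M_def)
  qed
  then show ?thesis by blast
qed

end
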